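(* Let $1 \le k \le 3$ and let $\sigma_k=[v_0,\dots,v_k]$ be a $k$-simplex in Euclidean 3-space whose vertices $v_0,\dots,v_k$ are represented as normalized PGA points in $\mathbb{R}_{3,0,1}$. Then \[ \frac{1}{k!}\,\lVert v_0\vee\cdots\vee v_k\rVert \;=\; \frac{1}{k!}\Big\lVert \sum_{\sigma_{k-1}\in\partial\sigma_k} S(\sigma_{k-1})\Big\rVert_\infty \;=\; \frac{1}{k!}\Big\lVert \sum_{i=0}^{k}(-1)^i\, v_0\vee\cdots\vee \widehat{v_i}\vee\cdots\vee v_k\Big\rVert_\infty , \] where $\widehat{v_i}$ means that $v_i$ is omitted from the join. That is, the $k$-magnitude of $\sigma_k$ (length, area, volume) can be computed from the carriers of the $(k-1)$-dimensional facets of its oriented boundary.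
   Context: $\mathbb{R}_{3,0,1}$ (3D plane-based geometric algebra, PGA) is the Clifford algebra generated by an orthogonal basis $\mathbf e_0,\mathbf e_1,\mathbf e_2,\mathbf e_3$ with $\mathbf e_1^2=\mathbf e_2^2=\mathbf e_3^2=1$ and $\mathbf e_0^2=0$; $\mathbf e_{ij\cdots}$ denotes the geometric product of distinct basis vectors, $\wedge$ is the outer (wedge) product, and $I_3=\mathbf e_{123}$. The Hodge dual $A\mapsto A^*$ is the linear map determined on basis blades $\mathbf e_J$ by $\mathbf e_J\,\mathbf e_J^*=\mathbf e_{0123}$ (with $\mathbf e_J^*$ a multiple of the complementary basis blade); the join is defined by $(A\vee B)^*=A^*\wedge B^*$. Every multivector splits uniquely as $A=A_E+\mathbf e_0A_I$ with $A_E,A_I$ in the subalgebra generated by $\mathbf e_1,\mathbf e_2,\mathbf e_3$. The (Euclidean) norm is $\lVert A\rVert=\lVert A_E\rVert$ and the ideal norm is $\lVert A\rVert_\infty=\lVert A_I\rVert$, where for an element $B$ of the Euclidean subalgebra $\lVert B\rVert$ is the square root of the sum of squares of its coefficients on the basis blades (equivalently $\sqrt{\tilde B B}$ for blades, $\tilde{\ }$ denoting reversion). A normalized point at position $\vec v=x\mathbf e_1+y\mathbf e_2+z\mathbf e_3$ is $v=(\mathbf e_0+\vec v)^*=\mathbf e_{123}-\mathbf e_0\vec v\,\mathbf e_{123}$. For a simplex $\sigma=[v_0,\dots,v_m]$ its carrier is $S(\sigma)=v_0\vee\cdots\vee v_m$. The oriented boundary is $\partial[v_0,\dots,v_k]=\sum_{i=0}^k(-1)^i[v_0,\dots,\widehat{v_i},\dots,v_k]$,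 and the sum over $\partial\sigma_k$ of $S$ is taken with these signs. *)

theory Defs
  imports "HOL-Analysis.Analysis"
begin

text \<open>Multivectors of R(3,0,1): a multivector is given by its coefficients on the
 basis blades e_J, J a subset of {0,1,2,3} (indices in increasing order). Coefficients
 at index sets outside Pow {0..3} are kept zero by all operations below.\<close>

type_synonym mv = "nat set \<Rightarrow> real"

definition blades :: "nat set set" where
  "blades = Pow {0..3}"

text \<open>Sign of reordering e_A e_B (A, B disjoint) into e_(A \<union> B):
 (-1) to the number of inversions.\<close>
definition blade_sign :: "nat set \<Rightarrow> nat set \<Rightarrow> real" where
  "blade_sign A B = (-1) ^ card {(a, b). a \<in> A \<and> b \<in> B \<and> b < a}"

definition wedge :: "mv \<Rightarrow> mv \<Rightarrow> mv" where
  "wedge X Y = (\<lambda>C. if C \<in> blades then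
      (\<Sum>A\<in>Pow C. blade_sign A (C - A) * X A * Y (C - A)) else 0)"

text \<open>Hodge dual: e_J * e_J^* = e_0123, e_J^* a multiple of the complementary blade,
 hence e_J^* = blade_sign J ({0..3} - J) * e_({0..3}-J).\<close>
definition hodge :: "mv \<Rightarrow> mv" where
  "hodge X = (\<lambda>K. if K \<in> blades then
      blade_sign ({0..3} - K) K * X ({0..3} - K) else 0)"

definition unhodge :: "mv \<Rightarrow> mv" where
  "unhodge Y = (\<lambda>J. if J \<in> blades then
      blade_sign J ({0..3} - J) * Y ({0..3} - J) else 0)"

definition join :: "mv \<Rightarrow> mv \<Rightarrow> mv" where
  "join A B = unhodge (wedge (hodge A) (hodge B))"

fun join_list :: "mv list \<Rightarrow> mv" where
  "join_list [] = (\<lambda>_. 0)"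
| "join_list [x] = x"
| "join_list (x # xs) = join x (join_list xs)"

text \<open>Euclidean norm ||A|| = ||A_E|| and ideal norm ||A||_inf = ||A_I||,
 where A = A_E + e_0 A_I, A_E, A_I in the subalgebra generated by e_1,e_2,e_3.\<close>
definition mv_norm :: "mv \<Rightarrow> real" where
  "mv_norm A = sqrt (\<Sum>J\<in>Pow {1..3}. (A J)\<^sup>2)"

definition mv_ideal_norm :: "mv \<Rightarrow> real" where
  "mv_ideal_norm A = sqrt (\<Sum>J\<in>Pow {1..3}. (A (insert 0 J))\<^sup>2)"

definition pos_vec :: "real^3 \<Rightarrow> mv" where
  "pos_vec p = (\<lambda>J. if J = {0} then 1
                    else if J = {1} then p $ 1
                    else if J = {2} then p $ 2
                    else if J = {3} then p $ 3 else 0)"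

definition pga_point :: "real^3 \<Rightarrow> mv" where
  "pga_point p = hodge (pos_vec p)"

definition carrier :: "mv list \<Rightarrow> mv" where
  "carrier \<sigma> = join_list \<sigma>"

definition boundary :: "mv list \<Rightarrow> (real \<times> mv list) list" where
  "boundary \<sigma> = map (\<lambda>i. ((-1) ^ i, take i \<sigma> @ drop (Suc i) \<sigma>)) [0..<length \<sigma>]"

end

theory Submission
  imports Defs
begin

(*
  The Hodge dual of the normalized point (e0 + p)* is -(e0 + p), so the carrier of a simplex
  is, up to sign, the undual of W = a_0 /\ ... /\ a_k with a_i = e0 + p_i. Undualising swaps
  blades with and without e0: the Euclidean norm of the carrier reads the coefficients of W on
  the blades e0 e_K, and the ideal norm of the alternating sum of facet carriers reads the
  coefficients of sum_i (-1)^i /\_{j ~= i} a_j on the blades e_K. The interior product iota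
  with the coordinate functional of e0 sends e0 e_K to e_K, and it is an antiderivation with
  iota a_i = 1, so iota W is exactly that alternating sum: iota is the simplicial boundary.
  Hence the two families of coefficients coincide.
*)

lemma blade_sign_square [simp]: "blade_sign A B * blade_sign A B = 1"
  by (simp add: blade_sign_def flip: power_add)

lemma blade_sign_empty_right [simp]: "blade_sign A {} = 1"
  by (simp add: blade_sign_def)

lemma blade_sign_singleton_left: "blade_sign {i} B = (-1) ^ card {b \<in> B. b < i}"
proof -
  have "card {(a, b). a \<in> {i} \<and> b \<in> B \<and> b < a} = card (Pair i ` {b \<in> B. b < i})"
    by (rule arg_cong[where f = card]) auto
  also have "\<dots> = card {b \<in> B. b < i}"
    by (rule card_image) (simp add: inj_on_def)
  finally show ?thesis
    by (simp add: blade_sign_def)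
qed

lemma blade_sign_zero_left [simp]: "blade_sign {0} B = 1"
  by (simp add: blade_sign_singleton_left)

lemma blade_sign_insert_zero:
  assumes "0 < i" "0 \<notin> B" "finite B"
  shows "blade_sign {i} (insert 0 B) = - blade_sign {i} B"
proof -
  have "{b \<in> insert 0 B. b < i} = insert 0 {b \<in> B. b < i}"
    using assms(1) by auto
  then show ?thesis
    using assms(2,3) by (simp add: blade_sign_singleton_left)
qed

lemma blade_sign_swap:
  assumes "finite A" "finite B" "A \<inter> B = {}"
  shows "blade_sign A B * blade_sign B A = (-1) ^ (card A * card B)"
proof -
  let ?gt = "{(a, b). a \<in> A \<and> b \<in> B \<and> b < a}"
  let ?lt = "{(a, b). a \<in> A \<and> b \<in> B \<and> a < b}"
  have "{(b, a). b \<in> B \<and> a \<in> A \<and> a < b} = prod.swap ` ?lt"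
    by auto
  then have "blade_sign B A = (-1) ^ card ?lt"
    by (simp add: blade_sign_def card_image)
  moreover have "card A * card B = card (?gt \<union> ?lt)"
    using assms(3)
    by (auto simp: neq_iff card_cartesian_product[symmetric] intro!: arg_cong[where f = card])
  moreover have "card (?gt \<union> ?lt) = card ?gt + card ?lt"
    by (rule card_Un_disjoint)
      (auto intro: finite_subset[OF _ finite_cartesian_product[OF assms(1,2)]])
  ultimately show ?thesis
    by (simp add: blade_sign_def power_add)
qed

definition mv_supported :: "mv \<Rightarrow> bool" where
  "mv_supported X \<longleftrightarrow> (\<forall>J. J \<notin> blades \<longrightarrow> X J = 0)"

lemma blades_complement [simp]: "{0..3} - K \<in> blades"
  by (simp add: blades_def)

lemma complement_complement: "K \<in> blades \<Longrightarrow> {0..3} - ({0..3} - K) = K"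
  by (auto simp: blades_def)

lemma mv_supported_hodge [simp]: "mv_supported (hodge X)"
  by (simp add: mv_supported_def hodge_def)

lemma mv_supported_unhodge [simp]: "mv_supported (unhodge X)"
  by (simp add: mv_supported_def unhodge_def)

lemma hodge_unhodge: "mv_supported Y \<Longrightarrow> hodge (unhodge Y) = Y"
  by (auto simp: fun_eq_iff hodge_def unhodge_def complement_complement mv_supported_def
      mult.assoc[symmetric])

lemma unhodge_hodge: "mv_supported X \<Longrightarrow> unhodge (hodge X) = X"
  by (auto simp: fun_eq_iff hodge_def unhodge_def complement_complement mv_supported_def
      mult.assoc[symmetric])

definition mv_vector :: "mv \<Rightarrow> bool" where
  "mv_vector X \<longleftrightarrow> (\<forall>J. card J \<noteq> 1 \<longrightarrow> X J = 0)"

lemma hodge_hodge_vector: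
  assumes "mv_vector X" "mv_supported X"
  shows "hodge (hodge X) = (\<lambda>K. - X K)"
proof
  fix K
  show "hodge (hodge X) K = - X K"
  proof (cases "K \<in> blades \<and> card K = 1")
    case True
    then have "finite K" "card ({0..3} - K) = 3"
      by (auto simp: blades_def card_Diff_subset finite_subset)
    then have "blade_sign ({0..3} - K) K * blade_sign K ({0..3} - K) = -1"
      using blade_sign_swap[of "{0..3} - K" K] True by auto
    then show ?thesis
      using True by (simp add: hodge_def complement_complement mult.assoc[symmetric])
  next
    case False
    then show ?thesis
      using assms by (auto simp: hodge_def mv_vector_def mv_supported_def complement_complement)
  qed
qed

lemma mv_vector_pos_vec: "mv_vector (pos_vec p)"
  by (auto simp: mv_vector_def pos_vec_def)

lemma hodge_pga_point: "hodge (pga_point p) = (\<lambda>K. - pos_vec p K)"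
proof -
  have "mv_supported (pos_vec p)"
    by (auto simp: mv_supported_def pos_vec_def blades_def)
  then show ?thesis
    by (simp add: pga_point_def hodge_hodge_vector mv_vector_pos_vec)
qed

lemma mv_supported_pga_point [simp]: "mv_supported (pga_point p)"
  by (simp add: pga_point_def)

lemma mv_vector_hodge_pga_point: "mv_vector (hodge (pga_point p))"
  using mv_vector_pos_vec by (simp add: hodge_pga_point mv_vector_def)

lemma hodge_pga_point_e0 [simp]: "hodge (pga_point p) {0} = -1"
  by (simp add: hodge_pga_point pos_vec_def)

lemma mv_supported_wedge [simp]: "mv_supported (wedge X Y)"
  by (simp add: mv_supported_def wedge_def)

lemma wedge_vector_left:
  assumes "mv_vector a" "C \<in> blades"
  shows "wedge a X C = (\<Sum>i\<in>C. blade_sign {i} (C - {i}) * a {i} * X (C - {i}))"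
proof -
  let ?f = "\<lambda>A. blade_sign A (C - A) * a A * X (C - A)"
  have "finite C"
    using assms(2) by (auto simp: blades_def finite_subset)
  have "sum ?f (Pow C) = sum ?f ((\<lambda>i. {i}) ` C)"
  proof (rule sum.mono_neutral_right)
    show "\<forall>A \<in> Pow C - (\<lambda>i. {i}) ` C. ?f A = 0"
      using assms(1) by (auto simp: mv_vector_def card_1_singleton_iff)
  qed (use \<open>finite C\<close> in auto)
  also have "\<dots> = (\<Sum>i\<in>C. ?f {i})"
    by (rule sum.reindex_cong[where l = "\<lambda>i. {i}"]) (auto simp: inj_on_def)
  finally show ?thesis
    using assms(2) by (simp add: wedge_def)
qed

lemma wedge_sum_right:
  "wedge a (\<lambda>K. \<Sum>i\<in>I. c i * f i K) = (\<lambda>K. \<Sum>i\<in>I. c i * wedge a (f i) K)"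
  by (auto simp: fun_eq_iff wedge_def sum_distrib_left ac_simps intro: sum.swap)

definition mv_one :: mv where
  "mv_one = (\<lambda>J. if J = {} then 1 else 0)"

lemma mv_supported_mv_one [simp]: "mv_supported mv_one"
  by (simp add: mv_supported_def mv_one_def blades_def)

lemma wedge_one_right:
  assumes "mv_supported X"
  shows "wedge X mv_one = X"
proof
  fix C
  show "wedge X mv_one C = X C"
  proof (cases "C \<in> blades")
    case True
    then have "finite C"
      by (auto simp: blades_def finite_subset)
    have "wedge X mv_one C = (\<Sum>A\<in>Pow C. if A = C then blade_sign A (C - A) * X A else 0)"
      using True by (auto simp: wedge_def mv_one_def intro!: sum.cong)
    with \<open>finite C\<close> show ?thesis
      by simp
  qed (use assms in \<open>simp add: wedge_def mv_supported_def\<close>)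
qed

(* The empty wedge is the scalar 1, whereas join_list sends [] to the junk value 0; this is
   why facets are only compared for simplices with at least two vertices. *)

definition wedge_list :: "mv list \<Rightarrow> mv" where
  "wedge_list xs = foldr wedge xs mv_one"

lemma wedge_list_Cons: "wedge_list (a # as) = wedge a (wedge_list as)"
  by (simp add: wedge_list_def)

lemma mv_supported_wedge_list [simp]: "mv_supported (wedge_list xs)"
  by (cases xs) (simp_all add: wedge_list_def)

definition facet :: "nat \<Rightarrow> 'a list \<Rightarrow> 'a list" where
  "facet i xs = take i xs @ drop (Suc i) xs"

lemma facet_map: "facet i (map f xs) = map f (facet i xs)"
  by (simp add: facet_def take_map drop_map)

lemma facet_Cons_0 [simp]: "facet 0 (x # xs) = xs"
  by (simp add: facet_def)

lemma facet_Cons_Suc [simp]: "facet (Suc i) (x # xs) = x # facet i xs"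
  by (simp add: facet_def)

lemma facet_nonempty: "2 \<le> length xs \<Longrightarrow> facet i xs \<noteq> []"
  by (auto simp: facet_def)

lemma facet_upt: "i < n \<Longrightarrow> facet i [0..<n] = filter (\<lambda>j. j \<noteq> i) [0..<n]"
proof -
  assume "i < n"
  then have "[0..<n] = [0..<i] @ i # [Suc i..<n]"
    by (metis less_imp_le_nat upt_add_eq_append upt_conv_Cons zero_le le_add_diff_inverse)
  then show ?thesis
    by (simp add: facet_def)
qed

definition e0_interior :: "mv \<Rightarrow> mv" where
  "e0_interior X = (\<lambda>K. if 0 \<in> K then 0 else X (insert 0 K))"

lemma e0_interior_wedge_vector:
  assumes "mv_vector a" "mv_supported X"
  shows "e0_interior (wedge a X) = (\<lambda>K. a {0} * X K - wedge a (e0_interior X) K)"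
proof
  fix K
  consider (outside) "K \<notin> blades" | (ideal) "K \<in> blades" "0 \<in> K" | (euclidean) "K \<in> blades" "0 \<notin> K"
    by blast
  then show "e0_interior (wedge a X) K = a {0} * X K - wedge a (e0_interior X) K"
  proof cases
    case outside
    then have "insert 0 K \<notin> blades"
      by (auto simp: blades_def)
    then show ?thesis
      using outside assms(2) by (simp add: e0_interior_def wedge_def mv_supported_def)
  next
    case ideal
    then have "finite K"
      by (auto simp: blades_def finite_subset)
    have "wedge a (e0_interior X) K = (\<Sum>i\<in>K. if i = 0 then a {0} * X K else 0)"
      using ideal
      by (auto simp: wedge_vector_left[OF assms(1)] e0_interior_def insert_absorb intro!: sum.cong)
    then show ?thesis
      using ideal \<open>finite K\<close> by (simp add: e0_interior_def)
  next
    case euclidean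
    then have "finite K" "insert 0 K \<in> blades"
      by (auto simp: blades_def finite_subset)
    have "wedge a X (insert 0 K)
        = a {0} * X K + (\<Sum>i\<in>K. blade_sign {i} (insert 0 K - {i}) * a {i} * X (insert 0 K - {i}))"
      using euclidean \<open>finite K\<close> \<open>insert 0 K \<in> blades\<close> by (simp add: wedge_vector_left[OF assms(1)])
    also have "\<dots> = a {0} * X K - (\<Sum>i\<in>K. blade_sign {i} (K - {i}) * a {i} * e0_interior X (K - {i}))"
    proof -
      have "blade_sign {i} (insert 0 K - {i}) * a {i} * X (insert 0 K - {i})
          = - (blade_sign {i} (K - {i}) * a {i} * e0_interior X (K - {i}))" if "i \<in> K" for i
      proof -
        have "0 < i" "insert 0 K - {i} = insert 0 (K - {i})"
          using that euclidean(2) by (auto intro: gr0I)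
        then show ?thesis
          using euclidean(2) \<open>finite K\<close> by (simp add: blade_sign_insert_zero e0_interior_def)
      qed
      then show ?thesis
        by (simp add: sum_negf[symmetric])
    qed
    also have "\<dots> = a {0} * X K - wedge a (e0_interior X) K"
      using euclidean by (simp add: wedge_vector_left[OF assms(1)])
    finally show ?thesis
      using euclidean by (simp add: e0_interior_def)
  qed
qed

lemma e0_interior_wedge_list:
  assumes "\<forall>a\<in>set as. mv_vector a"
  shows "e0_interior (wedge_list as)
    = (\<lambda>K. \<Sum>i<length as. (-1) ^ i * (as ! i) {0} * wedge_list (facet i as) K)"
  using assms
proof (induction as)
  case Nil
  show ?case
    by (simp add: fun_eq_iff e0_interior_def wedge_list_def mv_one_def)
next
  case (Cons a as)
  have "e0_interior (wedge_list (a # as))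
      = (\<lambda>K. a {0} * wedge_list as K - wedge a (e0_interior (wedge_list as)) K)"
    using Cons.prems by (simp add: wedge_list_Cons e0_interior_wedge_vector)
  also have "\<dots> = (\<lambda>K. a {0} * wedge_list as K
      + (\<Sum>i<length as. (-1) ^ Suc i * (as ! i) {0} * wedge a (wedge_list (facet i as)) K))"
    using Cons by (simp add: wedge_sum_right sum_negf)
  also have "\<dots> = (\<lambda>K. \<Sum>i<length (a # as).
      (-1) ^ i * ((a # as) ! i) {0} * wedge_list (facet i (a # as)) K)"
    by (simp only: length_Cons sum.lessThan_Suc_shift) (simp add: wedge_list_Cons)
  finally show ?case .
qed

lemma join_list_eq_unhodge_wedge_list:
  "xs \<noteq> [] \<Longrightarrow> \<forall>x\<in>set xs. mv_supported x \<Longrightarrow> join_list xs = unhodge (wedge_list (map hodge xs))"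
proof (induction xs rule: join_list.induct)
  case (2 x)
  then show ?case
    by (simp add: wedge_list_def wedge_one_right unhodge_hodge)
next
  case (3 x y ys)
  then show ?case
    by (simp add: join_def hodge_unhodge wedge_list_Cons)
qed simp

lemma unhodge_sum:
  "unhodge (\<lambda>K. \<Sum>i\<in>I. c i * f i K) = (\<lambda>J. \<Sum>i\<in>I. c i * unhodge (f i) J)"
  by (simp add: fun_eq_iff unhodge_def sum_distrib_left ac_simps)

lemma mv_ideal_norm_uminus: "mv_ideal_norm (\<lambda>J. - f J) = mv_ideal_norm f"
  by (simp add: mv_ideal_norm_def)

lemma mv_norm_unhodge: "mv_norm (unhodge W) = mv_ideal_norm (unhodge (e0_interior W))"
proof -
  have "(unhodge W J)\<^sup>2 = (unhodge (e0_interior W) (insert 0 J))\<^sup>2" if "J \<in> Pow {1..3}" for J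
  proof -
    have "J \<in> blades" "insert 0 J \<in> blades" "insert 0 ({0..3} - insert 0 J) = {0..3} - J"
      using that by (auto simp: blades_def)
    then show ?thesis
      by (simp add: unhodge_def e0_interior_def power_mult_distrib power2_eq_square)
  qed
  then show ?thesis
    unfolding mv_norm_def mv_ideal_norm_def by (metis (no_types, lifting) sum.cong)
qed

lemma mv_norm_join_eq_ideal_norm_boundary:
  assumes "2 \<le> length ps"
  shows "mv_norm (join_list (map pga_point ps))
    = mv_ideal_norm (\<lambda>J. \<Sum>i<length ps. (-1) ^ i * join_list (map pga_point (facet i ps)) J)"
proof -
  define as where "as = map (hodge \<circ> pga_point) ps"
  have join_eq: "join_list (map pga_point qs) = unhodge (wedge_list (map (hodge \<circ> pga_point) qs))"
    if "qs \<noteq> []" for qs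
    using that by (simp add: join_list_eq_unhodge_wedge_list)
  have "e0_interior (wedge_list as) = (\<lambda>K. \<Sum>i<length ps. - ((-1) ^ i) * wedge_list (facet i as) K)"
    by (simp add: e0_interior_wedge_list as_def mv_vector_hodge_pga_point)
  then have "unhodge (e0_interior (wedge_list as))
      = (\<lambda>J. \<Sum>i<length ps. - ((-1) ^ i) * unhodge (wedge_list (facet i as)) J)"
    by (simp only: unhodge_sum)
  also have "\<dots> = (\<lambda>J. - (\<Sum>i<length ps. (-1) ^ i * join_list (map pga_point (facet i ps)) J))"
    using facet_nonempty[OF assms] by (simp add: join_eq as_def facet_map sum_negf)
  finally have "unhodge (e0_interior (wedge_list as))
      = (\<lambda>J. - (\<Sum>i<length ps. (-1) ^ i * join_list (map pga_point (facet i ps)) J))" .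
  moreover have "join_list (map pga_point ps) = unhodge (wedge_list as)"
    using assms join_eq[of ps] unfolding as_def by fastforce
  ultimately show ?thesis
    by (simp add: mv_norm_unhodge mv_ideal_norm_uminus)
qed

lemma boundary_carrier_sum:
  "sum_list (map (\<lambda>(s, \<tau>). s * carrier \<tau> J) (boundary \<sigma>))
    = (\<Sum>i<length \<sigma>. (-1) ^ i * join_list (facet i \<sigma>) J)"
  by (simp add: boundary_def carrier_def facet_def comp_def interv_sum_list_conv_sum_set_nat
      atLeast0LessThan)

theorem theorem1:
  fixes k :: nat and p :: "nat \<Rightarrow> real^3"
  assumes "1 \<le> k" and "k \<le> 3"
  defines "\<sigma> \<equiv> map (\<lambda>i. pga_point (p i)) [0..<Suc k]"
  shows "mv_norm (join_list \<sigma>) / fact k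
           = mv_ideal_norm (\<lambda>J. sum_list (map (\<lambda>(s, \<tau>). s * carrier \<tau> J) (boundary \<sigma>))) / fact k
       \<and> mv_ideal_norm (\<lambda>J. sum_list (map (\<lambda>(s, \<tau>). s * carrier \<tau> J) (boundary \<sigma>))) / fact k
           = mv_ideal_norm (\<lambda>J. \<Sum>i\<le>k. (-1) ^ i *
                 join_list (map (\<lambda>j. pga_point (p j)) (filter (\<lambda>j. j \<noteq> i) [0..<Suc k])) J) / fact k"
proof -
  define ps where "ps = map p [0..<Suc k]"
  have \<sigma>_ps: "\<sigma> = map pga_point ps" and length_ps: "length ps = Suc k"
    by (simp_all add: \<sigma>_def ps_def)
  have facets: "facet i \<sigma> = map (\<lambda>j. pga_point (p j)) (filter (\<lambda>j. j \<noteq> i) [0..<Suc k])"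
    if "i \<le> k" for i
    using that by (simp add: \<sigma>_def facet_map facet_upt del: upt_Suc)
  have "(\<lambda>J. sum_list (map (\<lambda>(s, \<tau>). s * carrier \<tau> J) (boundary \<sigma>)))
      = (\<lambda>J. \<Sum>i\<le>k. (-1) ^ i *
          join_list (map (\<lambda>j. pga_point (p j)) (filter (\<lambda>j. j \<noteq> i) [0..<Suc k])) J)"
    by (simp add: boundary_carrier_sum \<sigma>_ps length_ps lessThan_Suc_atMost facets[unfolded \<sigma>_ps]
        del: upt_Suc)
  moreover have "mv_norm (join_list \<sigma>)
      = mv_ideal_norm (\<lambda>J. \<Sum>i<length ps. (-1) ^ i * join_list (facet i \<sigma>) J)"
    unfolding \<sigma>_ps facet_map using assms(1)
    by (intro mv_norm_join_eq_ideal_norm_boundary) (simp add: length_ps)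
  ultimately show ?thesis
    by (simp add: boundary_carrier_sum \<sigma>_ps length_ps)
qed

end
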